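(* Let $u$ be a drift function and $\alpha\in\mathbb R_+$. Then for every $x\in\mathbf X$, \[\sup_{n\in\mathbb N}\sum_{k=0}^{n}\frac{P^k(u-Pu)(x)}{(k+1)^\alpha}\le u(x).\]
   Context: $(X_n)$ Markov chain on a complete separable metric space $\mathbf X$, $\mathbb P_x$ its law from $x$, $Pf(x)=\mathbb E_xf(X_1)$. $\tau$ is a $\theta$-compatible stopping time ($\mathbb P_x(\tau=0)=0$ and $\mathbb P_x$-a.s. $\tau\ge2\Rightarrow\tau\circ\theta=\tau-1$) with $\mathbb E_x\tau<\infty$ for all $x$; $Qf(x)=\mathbb E_x[f(X_\tau)\mathbf 1_{\tau<\infty}]$. A drift function is a Borel $u:\mathbf X\to[1,\infty)$ such that $u-Pu$ is bounded below and $Qu$, $x\mapsto\mathbb E_x\tau/u(x)$ and $P(u-Pu+B_u)/(u-Pu+B_u)$ are bounded on $\mathbf X$, where $B_u=\sup(Pu-u)+1$. *)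

theory Defs
  imports "HOL-Probability.Probability"
begin

text \<open>Transition kernel K of the chain (P f (x) = E_x f(X_1) = integral of f against K x)
  and the family of path laws Px x (law of the chain started at x) on the stream space.
  The chain is X_n(omega) = omega !! n, the shift theta is stl.\<close>

definition markov_chain_laws ::
  "('a::polish_space \<Rightarrow> 'a measure) \<Rightarrow> ('a \<Rightarrow> 'a stream measure) \<Rightarrow> bool" where
  "markov_chain_laws K Px \<longleftrightarrow>
     K \<in> borel \<rightarrow>\<^sub>M prob_algebra borel \<and>
     Px \<in> borel \<rightarrow>\<^sub>M prob_algebra (stream_space borel) \<and>
     (\<forall>x. Px x = distr (K x \<bind> Px) (stream_space borel) (\<lambda>\<omega>. x ## \<omega>))"

definition Pop :: "('a \<Rightarrow> 'a measure) \<Rightarrow> ('a \<Rightarrow> real) \<Rightarrow> 'a \<Rightarrow> real" where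
  "Pop K f x = (\<integral>y. f y \<partial>K x)"

definition stopping_time_chain :: "('a::polish_space stream \<Rightarrow> enat) \<Rightarrow> bool" where
  "stopping_time_chain \<tau> \<longleftrightarrow>
     \<tau> \<in> stream_space borel \<rightarrow>\<^sub>M count_space UNIV \<and>
     (\<forall>n \<omega> \<omega>'. stake (Suc n) \<omega> = stake (Suc n) \<omega>' \<longrightarrow> (\<tau> \<omega> \<le> enat n \<longleftrightarrow> \<tau> \<omega>' \<le> enat n))"

definition theta_compatible :: "('a \<Rightarrow> 'a stream measure) \<Rightarrow> ('a stream \<Rightarrow> enat) \<Rightarrow> bool" where
  "theta_compatible Px \<tau> \<longleftrightarrow>
     (\<forall>x. (AE \<omega> in Px x. \<tau> \<omega> \<noteq> 0) \<and>
          (AE \<omega> in Px x. \<tau> \<omega> \<ge> 2 \<longrightarrow> \<tau> (stl \<omega>) = \<tau> \<omega> - 1))"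

definition Qop :: "('a \<Rightarrow> 'a stream measure) \<Rightarrow> ('a stream \<Rightarrow> enat) \<Rightarrow> ('a \<Rightarrow> real) \<Rightarrow> 'a \<Rightarrow> ennreal" where
  "Qop Px \<tau> f x = (\<integral>\<^sup>+\<omega>. (case \<tau> \<omega> of enat n \<Rightarrow> ennreal (f (\<omega> !! n)) | \<infinity> \<Rightarrow> 0) \<partial>Px x)"

definition exp_tau :: "('a \<Rightarrow> 'a stream measure) \<Rightarrow> ('a stream \<Rightarrow> enat) \<Rightarrow> 'a \<Rightarrow> ennreal" where
  "exp_tau Px \<tau> x = (\<integral>\<^sup>+\<omega>. ennreal_of_enat (\<tau> \<omega>) \<partial>Px x)"

definition B_drift :: "('a \<Rightarrow> 'a measure) \<Rightarrow> ('a \<Rightarrow> real) \<Rightarrow> real" where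
  "B_drift K u = (SUP x. Pop K u x - u x) + 1"

definition drift_function ::
  "('a::polish_space \<Rightarrow> 'a measure) \<Rightarrow> ('a \<Rightarrow> 'a stream measure) \<Rightarrow> ('a stream \<Rightarrow> enat)
    \<Rightarrow> ('a \<Rightarrow> real) \<Rightarrow> bool" where
  "drift_function K Px \<tau> u \<longleftrightarrow>
     u \<in> borel_measurable borel \<and> (\<forall>x. u x \<ge> 1) \<and>
     \<comment> \<open>u - Pu bounded below (in particular Pu is finite)\<close>
     (\<exists>c::real. \<forall>x. (\<integral>\<^sup>+y. ennreal (u y) \<partial>K x) \<le> ennreal (u x + c)) \<and>
     \<comment> \<open>Qu bounded\<close>
     (\<exists>M::real. \<forall>x. Qop Px \<tau> u x \<le> ennreal M) \<and>
     \<comment> \<open>E_x tau / u(x) bounded\<close>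
     (\<exists>M::real. \<forall>x. exp_tau Px \<tau> x \<le> ennreal (M * u x)) \<and>
     \<comment> \<open>P(u - Pu + B_u) / (u - Pu + B_u) bounded\<close>
     (\<exists>M::real. \<forall>x. (\<integral>\<^sup>+y. ennreal (u y - Pop K u y + B_drift K u) \<partial>K x)
                      \<le> ennreal (M * (u x - Pop K u x + B_drift K u)))"

end

theory Submission
  imports Defs
begin

text \<open>Write \<open>v\<^sub>k = P\<^sup>k u\<close>. The drift condition \<open>Pu \<le> u + c\<close> makes every \<open>v\<^sub>k\<close> nonnegative and
  dominated by \<open>u + k c\<close>, hence \<open>P\<close>-integrable, so \<open>P\<^sup>k (u - Pu) = v\<^sub>k - v\<^sub>k\<^sub>+\<^sub>1\<close> by linearity.
  The sum is then a telescoping sum weighted by the nonincreasing weights \<open>(k+1)\<^sup>-\<^sup>\<alpha>\<close>, and Abel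
  summation bounds it by \<open>v\<^sub>0 = u\<close> because all \<open>v\<^sub>k\<close> are nonnegative.\<close>

lemma sum_telescope_decseq_weight_le:
  fixes v w :: "nat \<Rightarrow> real"
  assumes v_nonneg: "\<And>k. 0 \<le> v k" and w_nonneg: "\<And>k. 0 \<le> w k" and "decseq w"
  shows "(\<Sum>k\<le>n. (v k - v (Suc k)) * w k) \<le> v 0 * w 0"
proof -
  have partial: "(\<Sum>k\<le>n. (v k - v (Suc k)) * w k) + v (Suc n) * w n \<le> v 0 * w 0" for n
  proof (induction n)
    case 0
    show ?case by (simp add: algebra_simps)
  next
    case (Suc n)
    have "v (Suc n) * w (Suc n) \<le> v (Suc n) * w n"
      using \<open>decseq w\<close> v_nonneg by (simp add: decseq_Suc_iff mult_left_mono)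
    then show ?case using Suc.IH by (simp add: algebra_simps)
  qed
  have "0 \<le> v (Suc n) * w n" using v_nonneg w_nonneg by simp
  with partial[of n] show ?thesis by linarith
qed

lemma decseq_inverse_powr:
  assumes "0 \<le> \<alpha>"
  shows "decseq (\<lambda>k. 1 / (real k + 1) powr \<alpha>)"
  using assms by (intro decseq_SucI divide_left_mono powr_mono2) auto

lemma Pop_diff:
  "integrable (K x) f \<Longrightarrow> integrable (K x) g \<Longrightarrow>
     Pop K (\<lambda>y. f y - g y) x = Pop K f x - Pop K g x"
  unfolding Pop_def by (rule Bochner_Integration.integral_diff)

context
  fixes K :: "'a::topological_space \<Rightarrow> 'a measure"
  assumes kernel: "K \<in> borel \<rightarrow>\<^sub>M prob_algebra borel"
begin

lemma prob_space_kernel: "prob_space (K x)"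
  and sets_kernel: "sets (K x) = sets borel"
  using measurable_space[OF kernel, of x] by (auto simp: space_prob_algebra)

lemma borel_measurable_kernel: "borel_measurable (K x) = borel_measurable borel"
  by (rule measurable_cong_sets[OF sets_kernel refl])

lemma borel_measurable_Pop:
  "f \<in> borel_measurable borel \<Longrightarrow> Pop K f \<in> borel_measurable borel"
  unfolding Pop_def
  by (rule measurable_compose[OF measurable_prob_algebraD[OF kernel]
        integral_measurable_subprob_algebra])

lemma integrable_kernel_dominated:
  fixes f u :: "'a \<Rightarrow> real"
  assumes "integrable (K x) u" "f \<in> borel_measurable borel" "\<And>y. \<bar>f y\<bar> \<le> u y + C"
  shows "integrable (K x) f"
proof (rule Bochner_Integration.integrable_bound)
  interpret prob_space "K x" by (rule prob_space_kernel)
  show "integrable (K x) (\<lambda>y. u y + C)" using assms(1) by simp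
  show "f \<in> borel_measurable (K x)" using assms(2) borel_measurable_kernel by blast
  show "AE y in K x. norm (f y) \<le> norm (u y + C)"
    using assms(3) by (auto intro!: AE_I2 order_trans[OF _ abs_ge_self])
qed

lemma Pop_le_of_nn_integral_le:
  assumes "u \<in> borel_measurable borel" "\<And>y. 0 \<le> u y"
    and le: "(\<integral>\<^sup>+y. ennreal (u y) \<partial>K x) \<le> ennreal (u x + c)" and "0 \<le> u x + c"
  shows "integrable (K x) u" and "Pop K u x \<le> u x + c"
proof -
  have u_meas: "u \<in> borel_measurable (K x)" using assms(1) borel_measurable_kernel by blast
  have "(\<integral>\<^sup>+y. ennreal (norm (u y)) \<partial>K x) = (\<integral>\<^sup>+y. ennreal (u y) \<partial>K x)"
    using assms(2) by simp
  also have "\<dots> < \<infinity>" using le by (simp add: le_less_trans)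
  finally show int: "integrable (K x) u" by (rule integrableI_bounded[OF u_meas])
  have "ennreal (Pop K u x) = (\<integral>\<^sup>+y. ennreal (u y) \<partial>K x)"
    unfolding Pop_def using int assms(2) by (simp add: nn_integral_eq_integral)
  with le have "ennreal (Pop K u x) \<le> ennreal (u x + c)" by simp
  with \<open>0 \<le> u x + c\<close> show "Pop K u x \<le> u x + c" by (simp add: ennreal_le_iff)
qed

context
  fixes u :: "'a \<Rightarrow> real" and c :: real
  assumes u_meas: "u \<in> borel_measurable borel" and u_nonneg: "\<And>y. 0 \<le> u y"
    and u_int: "\<And>x. integrable (K x) u" and drift: "\<And>x. Pop K u x \<le> u x + c"
begin

lemma Pop_iterate_drift_bounds:
  "(Pop K ^^ k) u \<in> borel_measurable borel \<and>
     (\<forall>y. 0 \<le> (Pop K ^^ k) u y \<and> (Pop K ^^ k) u y \<le> u y + real k * c)"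
proof (induction k)
  case 0
  show ?case using u_meas u_nonneg by simp
next
  case (Suc k)
  let ?v = "(Pop K ^^ k) u"
  have v_meas: "?v \<in> borel_measurable borel"
    and v_bounds: "\<And>y. 0 \<le> ?v y" "\<And>y. ?v y \<le> u y + real k * c"
    using Suc.IH by auto
  have v_int: "integrable (K x) ?v" for x
    using v_bounds by (intro integrable_kernel_dominated[OF u_int v_meas]) auto
  have "0 \<le> Pop K ?v y" for y
    unfolding Pop_def[of K ?v] using v_bounds by (intro integral_nonneg_AE) auto
  moreover have "Pop K ?v y \<le> u y + real (Suc k) * c" for y
  proof -
    interpret prob_space "K y" by (rule prob_space_kernel)
    have "Pop K ?v y \<le> (\<integral>z. u z + real k * c \<partial>K y)"
      unfolding Pop_def[of K ?v] using v_int u_int v_bounds by (intro integral_mono) auto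
    also have "\<dots> = Pop K u y + real k * c" unfolding Pop_def[of K u] using u_int by (simp add: prob_space)
    finally show ?thesis using drift[of y] by (simp add: algebra_simps)
  qed
  ultimately show ?case using borel_measurable_Pop[OF v_meas] by simp
qed

lemma integrable_Pop_iterate: "integrable (K x) ((Pop K ^^ k) u)"
  using Pop_iterate_drift_bounds[of k]
  by (intro integrable_kernel_dominated[OF u_int, where C = "real k * c"]) auto

lemma Pop_iterate_drift_telescope:
  "(Pop K ^^ k) (\<lambda>y. u y - Pop K u y) = (\<lambda>y. (Pop K ^^ k) u y - (Pop K ^^ Suc k) u y)"
proof (induction k)
  case 0
  show ?case by simp
next
  case (Suc k)
  have "(Pop K ^^ Suc k) (\<lambda>y. u y - Pop K u y)
          = Pop K (\<lambda>y. (Pop K ^^ k) u y - (Pop K ^^ Suc k) u y)"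
    using Suc.IH by simp
  also have "\<dots> = (\<lambda>y. (Pop K ^^ Suc k) u y - (Pop K ^^ Suc (Suc k)) u y)"
    using Pop_diff[of K _ "(Pop K ^^ k) u" "(Pop K ^^ Suc k) u"]
      integrable_Pop_iterate[of _ k] integrable_Pop_iterate[of _ "Suc k"] by auto
  finally show ?case .
qed

end

end

theorem mainTheorem16:
  fixes K :: "'a::polish_space \<Rightarrow> 'a measure"
    and Px :: "'a \<Rightarrow> 'a stream measure"
    and \<tau> :: "'a stream \<Rightarrow> enat"
    and u :: "'a \<Rightarrow> real" and \<alpha> :: real
  assumes "markov_chain_laws K Px"
    and "stopping_time_chain \<tau>" and "theta_compatible Px \<tau>"
    and "\<forall>x. exp_tau Px \<tau> x < \<infinity>"
    and "drift_function K Px \<tau> u"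
    and "\<alpha> \<ge> 0"
  shows "\<forall>x. (SUP n::nat. ereal (\<Sum>k\<le>n. ((Pop K ^^ k) (\<lambda>y. u y - Pop K u y)) x / (real k + 1) powr \<alpha>))
              \<le> ereal (u x)"
proof -
  have kernel: "K \<in> borel \<rightarrow>\<^sub>M prob_algebra borel"
    using assms(1) unfolding markov_chain_laws_def by blast
  have u_meas: "u \<in> borel_measurable borel" and u_ge_1: "\<And>x. 1 \<le> u x"
    using assms(5) unfolding drift_function_def by auto
  have u_nonneg: "0 \<le> u x" for x using u_ge_1[of x] by linarith
  obtain c where "\<And>x. (\<integral>\<^sup>+y. ennreal (u y) \<partial>K x) \<le> ennreal (u x + c)"
    using assms(5) unfolding drift_function_def by blast
  then have "(\<integral>\<^sup>+y. ennreal (u y) \<partial>K x) \<le> ennreal (u x + max c 0)" for x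
    by (meson order_trans ennreal_leI add_left_mono max.cobounded1)
  moreover have "0 \<le> u x + max c 0" for x using u_nonneg[of x] by simp
  ultimately have u_int: "\<And>x. integrable (K x) u" and drift: "\<And>x. Pop K u x \<le> u x + max c 0"
    using Pop_le_of_nn_integral_le[OF kernel u_meas u_nonneg] by blast+
  note iterate = Pop_iterate_drift_bounds[OF kernel u_meas u_nonneg u_int drift]
    Pop_iterate_drift_telescope[OF kernel u_meas u_nonneg u_int drift]
  have "(\<Sum>k\<le>n. ((Pop K ^^ k) (\<lambda>y. u y - Pop K u y)) x / (real k + 1) powr \<alpha>) \<le> u x" for n x
    using sum_telescope_decseq_weight_le[OF _ _ decseq_inverse_powr[OF assms(6)],
        of "\<lambda>k. (Pop K ^^ k) u x" n] iterate by simp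
  then show ?thesis by (auto intro: SUP_least)
qed

end
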